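(* Under the setting of the context, assume (TS1) and let $u$ be the solution of problem (P). Let $x\in\mu_x\mathbb{N}$ and suppose $u(x-\mu_x,t)\ge0$ for all $t\in\mathbb{T}$ and $u(x-\mu_x,t)>0$ for at least one $t\in\mathbb{T}$. Then $u(x,t)\ge0$ for all $t\in\mathbb{T}$.
   Context: A time scale $\mathbb{T}$ is a nonempty closed subset of $\mathbb{R}$; here $\min\mathbb{T}=0$ and $\sup\mathbb{T}=+\infty$. $\sigma(t)=\inf\{s\in\mathbb{T}:s>t\}$ is the forward jump and $\mu_t(t)=\sigma(t)-t$ the graininess; $u^{\Delta_t}$ denotes the (Hilger) delta derivative in $t$. Fix $A>0$, $k>0$, $\mu_x>0$, $\Omega=\mu_x\mathbb{Z}\times\mathbb{T}$, $\mu_x\mathbb{N}=\{\mu_x,2\mu_x,\dots\}$. Problem (P): $u^{\Delta_t}(x,t)+k\frac{u(x,t)-u(x-\mu_x,t)}{\mu_x}=0$ for $(x,t)\in\Omega$, $u(0,0)=A$, $u(x,0)=0$ for $x\ne0$. A solution is $u:\Omega\to\mathbb{R}$ with each $u(x,\cdot)$ delta differentiable on $\mathbb{T}$, satisfying (P), and bounded on $\mu_x\mathbb{Z}\times(\mathbb{T}\cap[0,T_0])$ for every $T_0>0$. Condition (TS1): $1-\frac{k\mu_t(t)}{\mu_x}>0$ for all $t\in\mathbb{T}$. *)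

theory Defs
  imports Complex_Main
begin

definition time_scale0 :: "real set \<Rightarrow> bool" where
  "time_scale0 TS \<longleftrightarrow> closed TS \<and> 0 \<in> TS \<and> (\<forall>t\<in>TS. 0 \<le> t) \<and> (\<forall>r. \<exists>t\<in>TS. r < t)"

definition fwd_jump :: "real set \<Rightarrow> real \<Rightarrow> real" where
  "fwd_jump TS t = Inf {s \<in> TS. s > t}"

definition graininess :: "real set \<Rightarrow> real \<Rightarrow> real" where
  "graininess TS t = fwd_jump TS t - t"

definition has_delta_derivative :: "real set \<Rightarrow> (real \<Rightarrow> real) \<Rightarrow> real \<Rightarrow> real \<Rightarrow> bool" where
  "has_delta_derivative TS f D t \<longleftrightarrow>
     (\<forall>\<epsilon>>0. \<exists>\<delta>>0. \<forall>s\<in>TS. \<bar>s - t\<bar> < \<delta> \<longrightarrow>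
        \<bar>f (fwd_jump TS t) - f s - D * (fwd_jump TS t - s)\<bar> \<le> \<epsilon> * \<bar>fwd_jump TS t - s\<bar>)"

definition delta_differentiable_on :: "real set \<Rightarrow> (real \<Rightarrow> real) \<Rightarrow> bool" where
  "delta_differentiable_on TS f \<longleftrightarrow> (\<forall>t\<in>TS. \<exists>D. has_delta_derivative TS f D t)"

definition grid :: "real \<Rightarrow> real set" where
  "grid mx = {mx * of_int j | j. True}"

text \<open>The equation u^Delta(x,t) + k (u(x,t) - u(x-mu_x,t))/mu_x = 0 says that
  u(x,.) has delta derivative -k (u(x,t) - u(x-mu_x,t))/mu_x at t.\<close>
definition is_solution_P ::
  "real set \<Rightarrow> real \<Rightarrow> real \<Rightarrow> real \<Rightarrow> (real \<Rightarrow> real \<Rightarrow> real) \<Rightarrow> bool" where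
  "is_solution_P TS A k mx u \<longleftrightarrow>
     (\<forall>x\<in>grid mx. delta_differentiable_on TS (u x)) \<and>
     (\<forall>x\<in>grid mx. \<forall>t\<in>TS.
        has_delta_derivative TS (u x) (- (k * (u x t - u (x - mx) t) / mx)) t) \<and>
     u 0 0 = A \<and>
     (\<forall>x\<in>grid mx. x \<noteq> 0 \<longrightarrow> u x 0 = 0) \<and>
     (\<forall>T0>0. \<exists>M. \<forall>x\<in>grid mx. \<forall>t\<in>TS. t \<le> T0 \<longrightarrow> \<bar>u x t\<bar> \<le> M)"

end

theory Submission
  imports Defs "HOL-Analysis.Analysis"
begin

(* Write c = k / mu_x, v = u(x,.) and w = u(x - mu_x,.).  The equation of (P)
   at the grid point x says v^Delta = -c (v - w) with v(0) = 0 (since x <> 0) and, by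
   hypothesis, w >= 0.  The theorem is therefore an instance of a comparison principle:
   under the graininess condition 1 - c mu(t) >= 0, any such v stays nonnegative. *)

section \<open>Elementary facts about delta derivatives\<close>

text \<open>At any point, a delta derivative links the value after the forward jump to the
  current value: \<open>f (\<sigma> t) = f t + D \<mu>(t)\<close>.  (Take \<open>s = t\<close> in the definition.)\<close>
lemma delta_derivative_jump:
  assumes der: "has_delta_derivative TS f D t" and t: "t \<in> TS"
  shows "f (fwd_jump TS t) = f t + D * graininess TS t"
proof (rule ccontr)
  define X where "X = f (fwd_jump TS t) - f t - D * (fwd_jump TS t - t)"
  define m where "m = \<bar>fwd_jump TS t - t\<bar>"
  assume "\<not> ?thesis"
  hence X0: "\<bar>X\<bar> > 0" unfolding X_def graininess_def by simp
  have m0: "m \<ge> 0" unfolding m_def by simp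
  define e where "e = \<bar>X\<bar> / (2 * (m + 1))"
  have "e > 0" unfolding e_def using X0 m0 by simp
  then obtain \<delta> where "\<delta> > 0" and "\<forall>s\<in>TS. \<bar>s - t\<bar> < \<delta> \<longrightarrow>
        \<bar>f (fwd_jump TS t) - f s - D * (fwd_jump TS t - s)\<bar> \<le> e * \<bar>fwd_jump TS t - s\<bar>"
    using der unfolding has_delta_derivative_def by blast
  hence "\<bar>X\<bar> \<le> e * m" using t unfolding X_def m_def by auto
  also have "e * m = \<bar>X\<bar> * (m / (2 * (m + 1)))" unfolding e_def by simp
  also have "\<dots> < \<bar>X\<bar> * 1"
    using X0 m0 by (intro mult_strict_left_mono) (simp_all add: field_simps)
  finally show False by simp
qed

lemma delta_derivative_continuous:
  assumes der: "has_delta_derivative TS f D t" and t: "t \<in> TS" and \<gamma>: "\<gamma> > 0"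
  shows "\<exists>\<delta>>0. \<forall>s\<in>TS. \<bar>s - t\<bar> < \<delta> \<longrightarrow> \<bar>f t - f s\<bar> \<le> \<gamma>"
proof -
  define \<sigma> where "\<sigma> = fwd_jump TS t"
  define m where "m = \<bar>\<sigma> - t\<bar>"
  have m0: "m \<ge> 0" unfolding m_def by simp
  define e where "e = \<gamma> / (2 * (2 * m + 1))"
  have e0: "e > 0" unfolding e_def using \<gamma> m0 by simp
  then obtain \<delta> where \<delta>: "\<delta> > 0" and approx: "\<forall>s\<in>TS. \<bar>s - t\<bar> < \<delta> \<longrightarrow>
        \<bar>f \<sigma> - f s - D * (\<sigma> - s)\<bar> \<le> e * \<bar>\<sigma> - s\<bar>"
    using der unfolding has_delta_derivative_def \<sigma>_def by blast
  define \<delta>' where "\<delta>' = min \<delta> (min 1 (\<gamma> / (2 * (\<bar>D\<bar> + 1))))"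
  have "\<bar>f t - f s\<bar> \<le> \<gamma>" if s: "s \<in> TS" "\<bar>s - t\<bar> < \<delta>'" for s
  proof -
    have near: "\<bar>s - t\<bar> < \<delta>" "\<bar>s - t\<bar> < 1" "\<bar>s - t\<bar> < \<gamma> / (2 * (\<bar>D\<bar> + 1))"
      using s \<delta>'_def by auto
    have at_s: "\<bar>f \<sigma> - f s - D * (\<sigma> - s)\<bar> \<le> e * (m + 1)"
    proof -
      have "\<bar>\<sigma> - s\<bar> \<le> m + 1" using near(2) unfolding m_def by linarith
      thus ?thesis using approx s near(1) e0 by (meson mult_left_mono less_imp_le order_trans)
    qed
    have at_t: "\<bar>f \<sigma> - f t - D * (\<sigma> - t)\<bar> \<le> e * m"
      using approx t \<delta> unfolding m_def by auto
    have linear: "\<bar>D * (t - s)\<bar> \<le> \<gamma> / 2"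
    proof -
      have "\<bar>D * (t - s)\<bar> \<le> (\<bar>D\<bar> + 1) * (\<gamma> / (2 * (\<bar>D\<bar> + 1)))"
        unfolding abs_mult using near(3) by (intro mult_mono) auto
      also have "\<dots> = \<gamma> / 2" using abs_ge_zero[of D] by (simp add: divide_simps)
      finally show ?thesis .
    qed
    have "e * (m + 1) + e * m = e * (2 * m + 1)" by (simp add: algebra_simps)
    also have "\<dots> = \<gamma> / 2"
    proof -
      have "2 * m + 1 \<noteq> 0" using m0 by linarith
      thus ?thesis unfolding e_def by (simp add: field_simps)
    qed
    finally have "e * (m + 1) + e * m = \<gamma> / 2" .
    moreover have "f t - f s = (f \<sigma> - f s - D * (\<sigma> - s)) - (f \<sigma> - f t - D * (\<sigma> - t)) + D * (t - s)"
      by (simp add: algebra_simps)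
    ultimately show ?thesis using at_s at_t linear by linarith
  qed
  moreover have "\<delta>' > 0" unfolding \<delta>'_def using \<delta> \<gamma> by simp
  ultimately show ?thesis by blast
qed

section \<open>The induction principle on time scales\<close>

lemma time_scale_step_from_past:
  fixes TS :: "real set" and P :: "real \<Rightarrow> bool"
  assumes closed: "closed TS" and min: "t0 \<in> TS" "\<forall>t\<in>TS. t0 \<le> t"
    and start: "P t0"
    and right_scattered: "\<And>t. t \<in> TS \<Longrightarrow> t < fwd_jump TS t \<Longrightarrow> P t \<Longrightarrow> P (fwd_jump TS t)"
    and left_dense: "\<And>t. t \<in> TS \<Longrightarrow> t0 < t \<Longrightarrow> (\<And>s. s \<in> TS \<Longrightarrow> s < t \<Longrightarrow> P s) \<Longrightarrow>
                        (\<And>\<delta>. \<delta> > 0 \<Longrightarrow> \<exists>s\<in>TS. t - \<delta> < s \<and> s < t) \<Longrightarrow> P t"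
    and a: "a \<in> TS" and past: "\<And>s. s \<in> TS \<Longrightarrow> s < a \<Longrightarrow> P s"
  shows "P a"
proof (cases "a = t0")
  case True
  then show ?thesis using start by simp
next
  case False
  hence a_pos: "t0 < a" using min a by force
  define L where "L = {s\<in>TS. s < a}"
  define p where "p = Sup L"
  have L_ne: "L \<noteq> {}" using min a_pos L_def by auto
  have L_bdd: "bdd_above L" unfolding L_def bdd_above_def by (auto intro: less_imp_le)
  have below_p: "s \<le> p" if "s \<in> L" for s
    unfolding p_def using cSup_upper[OF that L_bdd] .
  have p_le: "p \<le> a" unfolding p_def using L_ne L_def by (auto intro!: cSup_least)
  have p_TS: "p \<in> TS"
  proof -
    have "p \<in> closure L" unfolding p_def using closure_contains_Sup[OF L_ne L_bdd] .
    moreover have "closure L \<subseteq> TS" using closure_minimal[of L TS] closed L_def by auto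
    ultimately show ?thesis by blast
  qed
  show ?thesis
  proof (cases "p < a")
    case True
    \<comment> \<open>The predecessor \<open>p\<close> of \<open>a\<close> is right-scattered and jumps to \<open>a\<close>.\<close>
    have "fwd_jump TS p = a"
      unfolding fwd_jump_def
    proof (rule cInf_eq_minimum)
      show "a \<in> {s \<in> TS. s > p}" using a True by simp
      fix s assume s: "s \<in> {s \<in> TS. s > p}"
      show "a \<le> s"
      proof (rule ccontr)
        assume "\<not> a \<le> s"
        hence "s \<in> L" using s L_def by simp
        thus False using below_p s by fastforce
      qed
    qed
    then show ?thesis using right_scattered[OF p_TS] past[OF p_TS True] True by simp
  next
    case False
    \<comment> \<open>Otherwise \<open>a\<close> is approached from the left, i.e. left-dense.\<close>
    have "\<exists>s\<in>TS. a - \<delta> < s \<and> s < a" if "\<delta> > 0" for \<delta>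
    proof -
      have "a - \<delta> < Sup L" using False p_le that unfolding p_def by simp
      then obtain s where "s \<in> L" "a - \<delta> < s" using less_cSupD[OF L_ne] by blast
      thus ?thesis unfolding L_def by blast
    qed
    then show ?thesis using left_dense[OF a a_pos past] by blast
  qed
qed

text \<open>The proof considers the infimum of the set of failures.\<close>
lemma time_scale_induction:
  fixes TS :: "real set" and P :: "real \<Rightarrow> bool"
  assumes closed: "closed TS" and min: "t0 \<in> TS" "\<forall>t\<in>TS. t0 \<le> t"
    and start: "P t0"
    and right_scattered: "\<And>t. t \<in> TS \<Longrightarrow> t < fwd_jump TS t \<Longrightarrow> P t \<Longrightarrow> P (fwd_jump TS t)"
    and right_dense: "\<And>t. t \<in> TS \<Longrightarrow> fwd_jump TS t = t \<Longrightarrow> P t \<Longrightarrow>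
                        \<exists>\<delta>>0. \<forall>s\<in>TS. t < s \<and> s < t + \<delta> \<longrightarrow> P s"
    and left_dense: "\<And>t. t \<in> TS \<Longrightarrow> t0 < t \<Longrightarrow> (\<And>s. s \<in> TS \<Longrightarrow> s < t \<Longrightarrow> P s) \<Longrightarrow>
                        (\<And>\<delta>. \<delta> > 0 \<Longrightarrow> \<exists>s\<in>TS. t - \<delta> < s \<and> s < t) \<Longrightarrow> P t"
  shows "\<forall>t\<in>TS. P t"
proof (rule ccontr)
  define B where "B = {t\<in>TS. \<not> P t}"
  define a where "a = Inf B"
  assume "\<not> ?thesis"
  hence B_ne: "B \<noteq> {}" unfolding B_def by auto
  have B_bdd: "bdd_below B" unfolding B_def bdd_below_def using min by auto
  have a_le: "a \<le> b" if "b \<in> B" for b unfolding a_def using cInf_lower[OF that B_bdd] .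
  have a_TS: "a \<in> TS"
  proof -
    have "a \<in> closure B" unfolding a_def using closure_contains_Inf[OF B_ne B_bdd] .
    moreover have "closure B \<subseteq> TS" using closure_minimal[of B TS] closed B_def by auto
    ultimately show ?thesis by blast
  qed
  have past: "P s" if s: "s \<in> TS" "s < a" for s
  proof (rule ccontr)
    assume "\<not> P s"
    hence "s \<in> B" using s B_def by simp
    thus False using a_le s by fastforce
  qed
  have Pa: "P a"
    using time_scale_step_from_past[OF closed min start right_scattered left_dense a_TS past] .
  have B_above: "b \<in> TS \<and> a < b" if b: "b \<in> B" for b
    using a_le[OF b] b Pa unfolding B_def by (auto simp: order_le_less)
  \<comment> \<open>Failures accumulate at \<open>a\<close> from the right, so \<open>a\<close> is right-dense.\<close>
  have "fwd_jump TS a = a"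
  proof (rule antisym)
    have "B \<subseteq> {s\<in>TS. s > a}" using B_above by blast
    moreover have "bdd_below {s\<in>TS. s > a}" unfolding bdd_below_def by (auto intro: less_imp_le)
    ultimately have "Inf {s\<in>TS. s > a} \<le> Inf B" using cInf_superset_mono[OF B_ne] by blast
    thus "fwd_jump TS a \<le> a" unfolding fwd_jump_def a_def .
    have "{s\<in>TS. s > a} \<noteq> {}" using B_ne B_above by blast
    thus "a \<le> fwd_jump TS a" unfolding fwd_jump_def by (intro cInf_greatest) auto
  qed
  then obtain \<delta> where \<delta>: "\<delta> > 0" and good: "\<forall>s\<in>TS. a < s \<and> s < a + \<delta> \<longrightarrow> P s"
    using right_dense[OF a_TS _ Pa] by blast
  have "a + \<delta> \<le> b" if b: "b \<in> B" for b
  proof (rule ccontr)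
    assume "\<not> a + \<delta> \<le> b"
    hence "P b" using good B_above[OF b] by simp
    thus False using b B_def by simp
  qed
  hence "a + \<delta> \<le> a" unfolding a_def using B_ne by (intro cInf_greatest) auto
  thus False using \<delta> by simp
qed

section \<open>A comparison principle for \<open>v\<^sup>\<Delta> = -c (v - w)\<close>\<close>

text \<open>Near a right-dense point the perturbed barrier \<open>-\<epsilon> (1 + t)\<close> cannot be crossed:
  either \<open>v\<close> is nondecreasing to first order there, or \<open>v\<close> is strictly positive.\<close>
lemma barrier_right_dense:
  fixes v w :: "real \<Rightarrow> real"
  assumes der: "has_delta_derivative TS v (- (c * (v a - w a))) a"
    and rd: "fwd_jump TS a = a" and c: "c \<ge> 0" and w: "w a \<ge> 0"
    and \<epsilon>: "\<epsilon> > 0" and a0: "a \<ge> 0" and va: "v a \<ge> - \<epsilon> * (1 + a)"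
  shows "\<exists>\<delta>>0. \<forall>s\<in>TS. a < s \<and> s < a + \<delta> \<longrightarrow> v s \<ge> - \<epsilon> * (1 + s)"
proof -
  define D where "D = - (c * (v a - w a))"
  obtain \<delta> where \<delta>: "\<delta> > 0" and approx: "\<forall>s\<in>TS. \<bar>s - a\<bar> < \<delta> \<longrightarrow>
        \<bar>v a - v s - D * (a - s)\<bar> \<le> \<epsilon> * \<bar>a - s\<bar>"
    using der \<epsilon> unfolding has_delta_derivative_def rd D_def by blast
  have first_order: "v s \<ge> v a + D * (s - a) - \<epsilon> * (s - a)"
    if "s \<in> TS" "a < s" "s < a + \<delta>" for s
    using approx that by (auto simp: algebra_simps abs_le_iff)
  show ?thesis
  proof (cases "D \<ge> 0")
    case True
    have "v s \<ge> - \<epsilon> * (1 + s)" if s: "s \<in> TS" "a < s \<and> s < a + \<delta>" for s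
    proof -
      have "D * (s - a) \<ge> 0" using True s by simp
      thus ?thesis using first_order[of s] s va by (simp add: algebra_simps)
    qed
    then show ?thesis using \<delta> by blast
  next
    case False
    hence "c * (v a - w a) > 0" unfolding D_def by simp
    hence "v a > w a" using c by (simp add: zero_less_mult_iff)
    hence v_pos: "v a > 0" using w by linarith
    define \<delta>' where "\<delta>' = min \<delta> (v a / (- D))"
    have "v s \<ge> - \<epsilon> * (1 + s)" if s: "s \<in> TS" "a < s \<and> s < a + \<delta>'" for s
    proof -
      have "s - a < v a / (- D)"
        using s min.cobounded2[of \<delta> "v a / (- D)"] unfolding \<delta>'_def by linarith
      hence "(- D) * (s - a) < v a" using False by (simp add: field_simps)
      moreover have "s < a + \<delta>"
        using s min.cobounded1[of \<delta> "v a / (- D)"] unfolding \<delta>'_def by linarith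
      ultimately have "v s \<ge> - \<epsilon> * (s - a)" using first_order[of s] s by linarith
      moreover have "\<epsilon> * (1 + a) \<ge> 0" using \<epsilon> a0 by simp
      ultimately show ?thesis by (simp add: algebra_simps)
    qed
    moreover have "\<delta>' > 0"
      unfolding \<delta>'_def using \<delta> v_pos False by (simp add: divide_pos_neg)
    ultimately show ?thesis by blast
  qed
qed

lemma comparison_perturbed:
  fixes v w :: "real \<Rightarrow> real"
  assumes closed: "closed TS" and zero: "0 \<in> TS" and nonneg_TS: "\<forall>t\<in>TS. 0 \<le> t"
    and c: "c \<ge> 0" and small_graininess: "\<forall>t\<in>TS. 1 - c * graininess TS t \<ge> 0"
    and w: "\<forall>t\<in>TS. w t \<ge> 0" and v0: "v 0 \<ge> 0"
    and der: "\<forall>t\<in>TS. has_delta_derivative TS v (- (c * (v t - w t))) t"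
    and \<epsilon>: "\<epsilon> > 0"
  shows "\<forall>t\<in>TS. v t \<ge> - \<epsilon> * (1 + t)"
proof (rule time_scale_induction[OF closed zero nonneg_TS])
  show "v 0 \<ge> - \<epsilon> * (1 + 0)" using v0 \<epsilon> by simp
next
  fix t assume t: "t \<in> TS" "t < fwd_jump TS t" and vt: "v t \<ge> - \<epsilon> * (1 + t)"
  \<comment> \<open>Across a jump, \<open>v(\<sigma> t)\<close> is a combination of \<open>v t\<close> and \<open>w t \<ge> 0\<close> with weights
      \<open>1 - c \<mu>(t) \<ge> 0\<close> and \<open>c \<mu>(t) \<ge> 0\<close>.\<close>
  define h where "h = c * graininess TS t"
  have h: "0 \<le> h" "h \<le> 1"
    using c t small_graininess unfolding h_def graininess_def by auto
  have step: "v (fwd_jump TS t) = v t * (1 - h) + h * w t"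
    using delta_derivative_jump[OF der[rule_format, OF t(1)] t(1)]
    unfolding h_def by (simp add: algebra_simps)
  have "v t * (1 - h) \<ge> min 0 (v t)"
  proof (cases "v t \<ge> 0")
    case True
    then show ?thesis using h by simp
  next
    case False
    hence "h * v t \<le> 0" using h by (simp add: mult_nonneg_nonpos)
    then show ?thesis by (simp add: algebra_simps)
  qed
  moreover have "h * w t \<ge> 0" using h w t by simp
  moreover have "\<epsilon> * (1 + t) \<le> \<epsilon> * (1 + fwd_jump TS t)" using \<epsilon> t by simp
  moreover have "\<epsilon> * (1 + t) \<ge> 0" using \<epsilon> t nonneg_TS by simp
  ultimately show "v (fwd_jump TS t) \<ge> - \<epsilon> * (1 + fwd_jump TS t)"
    using step vt by linarith
next
  fix t assume t: "t \<in> TS" and rd: "fwd_jump TS t = t" and vt: "v t \<ge> - \<epsilon> * (1 + t)"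
  show "\<exists>\<delta>>0. \<forall>s\<in>TS. t < s \<and> s < t + \<delta> \<longrightarrow> v s \<ge> - \<epsilon> * (1 + s)"
    using barrier_right_dense[where v = v and w = w, OF der[rule_format, OF t] rd c w[rule_format, OF t] \<epsilon>
        nonneg_TS[rule_format, OF t] vt] .
next
  fix t assume t: "t \<in> TS"
    and past: "\<And>s. s \<in> TS \<Longrightarrow> s < t \<Longrightarrow> v s \<ge> - \<epsilon> * (1 + s)"
    and approach: "\<And>\<delta>. \<delta> > 0 \<Longrightarrow> \<exists>s\<in>TS. t - \<delta> < s \<and> s < t"
  \<comment> \<open>At a left-dense point the bound passes to the limit by continuity of \<open>v\<close>.\<close>
  show "v t \<ge> - \<epsilon> * (1 + t)"
  proof (rule ccontr)
    define X where "X = - \<epsilon> * (1 + t) - v t"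
    assume "\<not> ?thesis"
    hence X: "X > 0" unfolding X_def by simp
    obtain \<delta> where "\<delta> > 0" and cont: "\<forall>s\<in>TS. \<bar>s - t\<bar> < \<delta> \<longrightarrow> \<bar>v t - v s\<bar> \<le> X / 2"
      using delta_derivative_continuous[OF der[rule_format, OF t] t, of "X / 2"] X by auto
    then obtain s where s: "s \<in> TS" "t - \<delta> < s" "s < t" using approach by blast
    have "\<bar>v t - v s\<bar> \<le> X / 2" using cont s by auto
    hence "- (v t - v s) \<le> X / 2" by (rule abs_le_D2)
    moreover have "v s \<ge> - \<epsilon> * (1 + s)" using past s by blast
    moreover have "- \<epsilon> * (1 + t) \<le> - \<epsilon> * (1 + s)" using s \<epsilon> by simp
    ultimately show False using X unfolding X_def by (simp add: algebra_simps)
  qed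
qed

text \<open>Comparison principle: letting \<open>\<epsilon> \<rightarrow> 0\<close>, the solution \<open>v\<close> is nonnegative.\<close>
lemma comparison_nonneg:
  fixes v w :: "real \<Rightarrow> real"
  assumes closed: "closed TS" and zero: "0 \<in> TS" and nonneg_TS: "\<forall>t\<in>TS. 0 \<le> t"
    and c: "c \<ge> 0" and small_graininess: "\<forall>t\<in>TS. 1 - c * graininess TS t \<ge> 0"
    and w: "\<forall>t\<in>TS. w t \<ge> 0" and v0: "v 0 \<ge> 0"
    and der: "\<forall>t\<in>TS. has_delta_derivative TS v (- (c * (v t - w t))) t"
  shows "\<forall>t\<in>TS. v t \<ge> 0"
proof (rule ballI, rule ccontr)
  fix t assume t: "t \<in> TS" and "\<not> v t \<ge> 0"
  hence neg: "v t < 0" by simp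
  have t0: "t \<ge> 0" using nonneg_TS t by auto
  define \<epsilon> where "\<epsilon> = - v t / (2 * (1 + t))"
  have "\<epsilon> > 0" unfolding \<epsilon>_def using neg t0 by (intro divide_pos_pos) auto
  hence "v t \<ge> - \<epsilon> * (1 + t)"
    using comparison_perturbed[OF closed zero nonneg_TS c small_graininess w v0 der] t by simp
  also have "- \<epsilon> * (1 + t) = v t / 2" unfolding \<epsilon>_def using t0 by (simp add: field_simps)
  finally show False using neg by simp
qed

theorem mainTheorem8:
  fixes TS :: "real set" and A k mx x :: real and u :: "real \<Rightarrow> real \<Rightarrow> real"
  assumes "time_scale0 TS"
    and "A > 0" and "k > 0" and "mx > 0"
    and TS1: "\<forall>t\<in>TS. 1 - k * graininess TS t / mx > 0"
    and sol: "is_solution_P TS A k mx u"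
    and hx: "\<exists>n::nat. n \<ge> 1 \<and> x = mx * of_nat n"
    and nonneg: "\<forall>t\<in>TS. u (x - mx) t \<ge> 0"
    and pos: "\<exists>t\<in>TS. u (x - mx) t > 0"
  shows "\<forall>t\<in>TS. u x t \<ge> 0"
proof (rule comparison_nonneg[where c = "k / mx" and w = "u (x - mx)"])
  obtain n :: nat where n: "n \<ge> 1" "x = mx * of_nat n" using hx by blast
  have x_grid: "x \<in> grid mx" unfolding grid_def using n by (auto intro!: exI[of _ "int n"])
  have "x \<noteq> 0" using n \<open>mx > 0\<close> by simp
  then show "u x 0 \<ge> 0" using sol x_grid unfolding is_solution_P_def by auto
  show "\<forall>t\<in>TS. has_delta_derivative TS (u x) (- (k / mx * (u x t - u (x - mx) t))) t"
    using sol x_grid unfolding is_solution_P_def by simp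
  show "closed TS" "0 \<in> TS" "\<forall>t\<in>TS. 0 \<le> t"
    using \<open>time_scale0 TS\<close> unfolding time_scale0_def by auto
  show "k / mx \<ge> 0" using \<open>k > 0\<close> \<open>mx > 0\<close> by simp
  show "\<forall>t\<in>TS. 1 - k / mx * graininess TS t \<ge> 0" using TS1 by (auto intro: less_imp_le)
qed (use nonneg in auto)

end
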